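(* Let $r_I>r_0>0$, $v_1,v_2>0$, $w_V>0$ and $w_I$ be real numbers with $w_I\ge \frac{w_V v_2}{v_1+v_2}$. Let $n\ge 1$ be an integer and $l_1,\dots,l_{n-1}\ge 0$ be real numbers. Consider the optimization problem (P) described in the context. Then the optimal value of (P) is $$\left(\sum_{i=1}^{n}Y_i\right)^*=\frac{\sum_{i=1}^{n-1}\min\{l_i,2r_0\}+2r_0}{v_1+v_2}\,w_V .$$ Moreover, this optimal value is attained by the feasible point $$D_i^*=\frac{\min\{l_i,2r_I\}}{v_2}w_I,\quad Y_i^*=\frac{\min\{l_i,2r_0\}}{v_1+v_2}w_V\ (i=1,\dots,n-1),\qquad D_n^*=\frac{2r_I}{v_2}w_I,\quad Y_n^*=\frac{2r_0}{v_1+v_2}w_V .$$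
   Context: Model: a vehicle of interest (VoI) moving at speed $v_1$ receives data from $n$ "helper" vehicles moving in the opposite direction at speed $v_2$; consecutive helpers are at distances $l_1,\dots,l_{n-1}$; helpers download from an infrastructure point of radio range $r_I$ at rate $w_I$, and deliver to the VoI over vehicle links of range $r_0$ at rate $w_V$. $D_i$ is the amount of data helper $i$ receives from the infrastructure and $Y_i$ the amount it delivers to the VoI. The optimization problem (P), over real variables $D_1,\dots,D_n,Y_1,\dots,Y_n$, is: maximize $\sum_{i=1}^n Y_i$ subject to (i) $0\le D_i\le \frac{2r_I}{v_2}w_I$ for $i=1,\dots,n$; (ii) $\sum_{i=k_1}^{k_2}D_i\le \frac{\sum_{i=k_1}^{k_2-1}\min\{l_i,2r_I\}+2r_I}{v_2}w_I$ for all $1\le k_1\le k_2\le n$; (iii) $0\le Y_i\le \frac{2r_0}{v_1+v_2}w_V$ for $i=1,\dots,n$; (iv) $Y_i\le D_i$ for $i=1,\dots,n$; (v) $\sum_{i=k_1}^{k_2}Y_i\le \frac{\sum_{i=k_1}^{k_2-1}\min\{l_i,2r_0\}+2r_0}{v_1+v_2}w_V$ for all $1\le k_1\le k_2\le n$. (Empty sums are zero.) *)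

theory Defs
  imports Complex_Main
begin

text \<open>Feasibility for problem (P). Variables D, Y and distances l are indexed by
natural numbers; only indices 1..n (resp. 1..n-1 for l) are relevant.\<close>

definition feasibleP ::
  "nat \<Rightarrow> real \<Rightarrow> real \<Rightarrow> real \<Rightarrow> real \<Rightarrow> real \<Rightarrow> real \<Rightarrow> (nat \<Rightarrow> real)
   \<Rightarrow> (nat \<Rightarrow> real) \<Rightarrow> (nat \<Rightarrow> real) \<Rightarrow> bool" where
  "feasibleP n rI r0 v1 v2 wI wV l D Y \<longleftrightarrow>
     (\<forall>i\<in>{1..n}. 0 \<le> D i \<and> D i \<le> 2 * rI / v2 * wI) \<and>
     (\<forall>k1 k2. 1 \<le> k1 \<and> k1 \<le> k2 \<and> k2 \<le> n \<longrightarrow>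
        (\<Sum>i=k1..k2. D i) \<le> ((\<Sum>i=k1..<k2. min (l i) (2 * rI)) + 2 * rI) / v2 * wI) \<and>
     (\<forall>i\<in>{1..n}. 0 \<le> Y i \<and> Y i \<le> 2 * r0 / (v1 + v2) * wV) \<and>
     (\<forall>i\<in>{1..n}. Y i \<le> D i) \<and>
     (\<forall>k1 k2. 1 \<le> k1 \<and> k1 \<le> k2 \<and> k2 \<le> n \<longrightarrow>
        (\<Sum>i=k1..k2. Y i) \<le> ((\<Sum>i=k1..<k2. min (l i) (2 * r0)) + 2 * r0) / (v1 + v2) * wV)"

definition optimal_valueP ::
  "nat \<Rightarrow> real \<Rightarrow> real \<Rightarrow> real \<Rightarrow> real \<Rightarrow> real \<Rightarrow> real \<Rightarrow> (nat \<Rightarrow> real) \<Rightarrow> real \<Rightarrow> bool" where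
  "optimal_valueP n rI r0 v1 v2 wI wV l opt \<longleftrightarrow>
     (\<exists>D Y. feasibleP n rI r0 v1 v2 wI wV l D Y \<and> (\<Sum>i=1..n. Y i) = opt) \<and>
     (\<forall>D Y. feasibleP n rI r0 v1 v2 wI wV l D Y \<longrightarrow> (\<Sum>i=1..n. Y i) \<le> opt)"

end

theory Submission
  imports Defs
begin

text \<open>Constraint (v) for the full window 1..n already bounds the objective by the claimed
value, so it suffices to exhibit a feasible point attaining it. Both D* and Y* are scaled
copies of a capped profile: min (l i) c on the gaps i < n and c at the last helper. Any
window sum of such a profile is at most the window bound, with equality for the window
1..n, and Y* \<le> D* pointwise because r0 \<le> rI and wV/(v1 + v2) \<le> wI/v2.\<close>

definition capped_profile :: "nat \<Rightarrow> (nat \<Rightarrow> real) \<Rightarrow> real \<Rightarrow> nat \<Rightarrow> real" where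
  "capped_profile n l c i = (if i < n then min (l i) c else c)"

lemma capped_profile_le: "capped_profile n l c i \<le> c"
  by (simp add: capped_profile_def)

lemma capped_profile_nonneg:
  assumes "0 \<le> c" "\<forall>i\<in>{1..<n}. 0 \<le> l i" "1 \<le> i"
  shows "0 \<le> capped_profile n l c i"
  using assms by (simp add: capped_profile_def)

lemma capped_profile_mono:
  assumes "c \<le> c'"
  shows "capped_profile n l c i \<le> capped_profile n l c' i"
  using assms by (auto simp: capped_profile_def)

lemma sum_capped_profile_le:
  assumes "k1 \<le> k2" "k2 \<le> n"
  shows "(\<Sum>i=k1..k2. capped_profile n l c i) \<le> (\<Sum>i=k1..<k2. min (l i) c) + c"
proof -
  have "(\<Sum>i=k1..<k2. capped_profile n l c i) = (\<Sum>i=k1..<k2. min (l i) c)"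
    using assms(2) by (intro sum.cong) (auto simp: capped_profile_def)
  then show ?thesis
    using assms(1) capped_profile_le[of n l c k2] by (simp add: sum.last_plus)
qed

lemma sum_capped_profile_full:
  assumes "1 \<le> n"
  shows "(\<Sum>i=1..n. capped_profile n l c i) = (\<Sum>i=1..<n. min (l i) c) + c"
proof -
  have "(\<Sum>i=1..<n. capped_profile n l c i) = (\<Sum>i=1..<n. min (l i) c)"
    by (intro sum.cong) (auto simp: capped_profile_def)
  then show ?thesis
    using assms by (simp add: sum.last_plus capped_profile_def)
qed

lemma sum_scaled_capped_profile_le:
  fixes s w :: real
  assumes "k1 \<le> k2" "k2 \<le> n" "0 < s" "0 \<le> w"
  shows "(\<Sum>i=k1..k2. capped_profile n l c i / s * w) \<le> ((\<Sum>i=k1..<k2. min (l i) c) + c) / s * w"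
proof -
  have "(\<Sum>i=k1..k2. capped_profile n l c i / s * w) = (\<Sum>i=k1..k2. capped_profile n l c i) / s * w"
    by (simp add: sum_divide_distrib sum_distrib_right)
  also have "\<dots> \<le> ((\<Sum>i=k1..<k2. min (l i) c) + c) / s * w"
    using sum_capped_profile_le[OF assms(1,2)] assms(3,4)
    by (intro mult_right_mono divide_right_mono) auto
  finally show ?thesis .
qed

lemma feasibleP_sum_le:
  assumes "feasibleP n rI r0 v1 v2 wI wV l D Y" "1 \<le> n"
  shows "(\<Sum>i=1..n. Y i) \<le> ((\<Sum>i=1..<n. min (l i) (2 * r0)) + 2 * r0) / (v1 + v2) * wV"
  using assms unfolding feasibleP_def by blast

lemma feasibleP_capped_profiles:
  assumes "0 \<le> r0" "r0 \<le> rI" "0 < v2" "0 < v1 + v2" "0 \<le> wV"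
    and rates: "wV / (v1 + v2) \<le> wI / v2"
    and l_nonneg: "\<forall>i\<in>{1..<n}. 0 \<le> l i"
  shows "feasibleP n rI r0 v1 v2 wI wV l
           (\<lambda>i. capped_profile n l (2 * rI) i / v2 * wI)
           (\<lambda>i. capped_profile n l (2 * r0) i / (v1 + v2) * wV)"
proof -
  have "0 \<le> wI / v2"
    using rates assms(4,5) by (meson divide_nonneg_pos order_trans)
  then have "0 \<le> wI"
    using assms(3) by (simp add: zero_le_divide_iff)
  have Y_le_D: "capped_profile n l (2 * r0) i / (v1 + v2) * wV \<le> capped_profile n l (2 * rI) i / v2 * wI"
    if "1 \<le> i" for i
  proof -
    have "capped_profile n l (2 * r0) i / (v1 + v2) * wV = capped_profile n l (2 * r0) i * (wV / (v1 + v2))"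
      by simp
    also have "\<dots> \<le> capped_profile n l (2 * rI) i * (wI / v2)"
      using capped_profile_mono[of "2 * r0" "2 * rI" n l i] capped_profile_nonneg[OF _ l_nonneg that]
        rates assms(1,2,4,5)
      by (intro mult_mono) auto
    finally show ?thesis by simp
  qed
  show ?thesis
    unfolding feasibleP_def
    using assms(1-5) \<open>0 \<le> wI\<close> Y_le_D capped_profile_nonneg[OF _ l_nonneg] capped_profile_le
      sum_scaled_capped_profile_le
    by (auto intro!: mult_right_mono divide_right_mono mult_nonneg_nonneg)
qed

theorem theorem2:
  fixes rI r0 v1 v2 wI wV :: real and n :: nat and l :: "nat \<Rightarrow> real"
  assumes "rI > r0" "r0 > 0" "v1 > 0" "v2 > 0" "wV > 0"
    and "wI \<ge> wV * v2 / (v1 + v2)"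
    and "n \<ge> 1"
    and "\<forall>i\<in>{1..<n}. l i \<ge> 0"
  defines "Dopt \<equiv> (\<lambda>i. if i < n then min (l i) (2 * rI) / v2 * wI else 2 * rI / v2 * wI)"
    and "Yopt \<equiv> (\<lambda>i. if i < n then min (l i) (2 * r0) / (v1 + v2) * wV else 2 * r0 / (v1 + v2) * wV)"
  shows "optimal_valueP n rI r0 v1 v2 wI wV l
           (((\<Sum>i=1..<n. min (l i) (2 * r0)) + 2 * r0) / (v1 + v2) * wV) \<and>
         feasibleP n rI r0 v1 v2 wI wV l Dopt Yopt \<and>
         (\<Sum>i=1..n. Yopt i) = ((\<Sum>i=1..<n. min (l i) (2 * r0)) + 2 * r0) / (v1 + v2) * wV"
proof -
  have D: "Dopt = (\<lambda>i. capped_profile n l (2 * rI) i / v2 * wI)"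
    and Y: "Yopt = (\<lambda>i. capped_profile n l (2 * r0) i / (v1 + v2) * wV)"
    by (simp_all add: Dopt_def Yopt_def capped_profile_def fun_eq_iff)
  have "wV / (v1 + v2) \<le> wI / v2"
    using assms(3-6) by (simp add: pos_le_divide_eq mult.commute)
  then have feasible: "feasibleP n rI r0 v1 v2 wI wV l Dopt Yopt"
    unfolding D Y using assms(1-5,8) by (intro feasibleP_capped_profiles) auto
  have attained: "(\<Sum>i=1..n. Yopt i) = ((\<Sum>i=1..<n. min (l i) (2 * r0)) + 2 * r0) / (v1 + v2) * wV"
    unfolding Y using sum_capped_profile_full[OF assms(7), of l "2 * r0"]
    by (simp add: sum_divide_distrib[symmetric] sum_distrib_right[symmetric])
  show ?thesis
    unfolding optimal_valueP_def using feasible attained feasibleP_sum_le assms(7) by blast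
qed

end
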